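(* If $f$ and $g$ are directionally invariant functions on $\hat G$ such that the convolution $f*g$ is defined, then $f*g$ is directionally invariant.
   Context: Fix an integer $d>6$ and a compact metric space $\mathcal{D}$. A decorated triangulation is a 2-dimensional abstract simplicial complex with vertex degrees at most $d$ and genus-$0$ surface geometric realization, with decorations in $\mathcal{D}$ on directed edges. A discrete tangent vector is a directed edge $(x_1,x_2)$. $\hat G$ is the set of (automorphism orbits of) triangulations with two marked discrete tangent vectors, written $(x_1,x_2,y_1,y_2)$, a groupoid with units the once-marked triangulations; the leaf of $(x_1,x_2)$ is the set of discrete tangent vectors of its triangulation with counting measure $\lambda_{(x_1,x_2)}$. Convolution: $(f*g)(x_1,x_2,z_1,z_2)=\int f(x_1,x_2,y_1,y_2)g(y_1,y_2,z_1,z_2)\,d\lambda_{(x_1,x_2)}(y_1,y_2)$. A function $f$ on $\hat G$ is directionally invariant if $f(x_1,x_2,y_1,y_2)=f(x_1,x_3,y_1,y_3)$ whenever both $(x_1,x_2,y_1,y_2)$ and $(x_1,x_3,y_1,y_3)$ lie in $\hat G$. *)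

theory Defs
  imports "HOL-Analysis.Analysis"
begin

definition simplicial_complex :: "'v set set \<Rightarrow> bool" where
  "simplicial_complex K \<longleftrightarrow>
     (\<forall>\<sigma>\<in>K. finite \<sigma> \<and> \<sigma> \<noteq> {}) \<and> (\<forall>\<sigma>\<in>K. \<forall>\<tau>. \<tau> \<subseteq> \<sigma> \<and> \<tau> \<noteq> {} \<longrightarrow> \<tau> \<in> K)"

definition two_dimensional :: "'v set set \<Rightarrow> bool" where
  "two_dimensional K \<longleftrightarrow> (\<forall>\<sigma>\<in>K. card \<sigma> \<le> 3) \<and> (\<exists>\<sigma>\<in>K. card \<sigma> = 3)"

definition cx_vertices :: "'v set set \<Rightarrow> 'v set" where
  "cx_vertices K = \<Union>K"

definition cx_edges :: "'v set set \<Rightarrow> 'v set set" where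
  "cx_edges K = {\<sigma>\<in>K. card \<sigma> = 2}"

definition degree_bounded :: "nat \<Rightarrow> 'v set set \<Rightarrow> bool" where
  "degree_bounded d K \<longleftrightarrow>
     (\<forall>v\<in>cx_vertices K. finite {e\<in>cx_edges K. v \<in> e} \<and> card {e\<in>cx_edges K. v \<in> e} \<le> d)"

text \<open>Discrete tangent vectors = directed edges.\<close>
definition dtv :: "'v set set \<Rightarrow> ('v \<times> 'v) set" where
  "dtv K = {(a, b). a \<noteq> b \<and> {a, b} \<in> K}"

text \<open>Points of the realization: barycentric coordinate functions supported on a simplex.\<close>
definition geom_real :: "'v set set \<Rightarrow> ('v \<Rightarrow> real) set" where
  "geom_real K = {b. (\<forall>v. 0 \<le> b v) \<and> {v. b v \<noteq> 0} \<in> K \<and> sum b {v. b v \<noteq> 0} = 1}"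

text \<open>The l1 (barycentric) metric; for locally finite complexes its topology is
the usual (weak) topology of the realization.\<close>
definition geom_dist :: "('v \<Rightarrow> real) \<Rightarrow> ('v \<Rightarrow> real) \<Rightarrow> real" where
  "geom_dist a b = (\<Sum>v\<in>{v. a v \<noteq> 0} \<union> {v. b v \<noteq> 0}. \<bar>a v - b v\<bar>)"

definition geom_top :: "'v set set \<Rightarrow> ('v \<Rightarrow> real) topology" where
  "geom_top K = Metric_space.mtopology (geom_real K) geom_dist"

text \<open>A genus-0 surface (connected, without boundary) is exactly a space
homeomorphic to a nonempty connected open subset of the 2-sphere.\<close>
definition genus0_surface :: "'a topology \<Rightarrow> bool" where
  "genus0_surface X \<longleftrightarrow>
     (\<exists>U. openin (top_of_set (sphere (0::real^3) 1)) U \<and> U \<noteq> {} \<and> connected U \<and>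
          X homeomorphic_space top_of_set U)"

definition decorated_triangulation ::
  "nat \<Rightarrow> 'd set \<Rightarrow> 'v set set \<Rightarrow> ('v \<times> 'v \<Rightarrow> 'd) \<Rightarrow> bool" where
  "decorated_triangulation d D K dec \<longleftrightarrow>
     simplicial_complex K \<and> two_dimensional K \<and> degree_bounded d K \<and>
     genus0_surface (geom_top K) \<and> (\<forall>e\<in>dtv K. dec e \<in> D)"

definition dtri_iso ::
  "('v \<Rightarrow> 'v) \<Rightarrow> 'v set set \<Rightarrow> ('v \<times> 'v \<Rightarrow> 'd) \<Rightarrow> 'v set set \<Rightarrow> ('v \<times> 'v \<Rightarrow> 'd) \<Rightarrow> bool" where
  "dtri_iso \<phi> K dec K' dec' \<longleftrightarrow>
     bij_betw \<phi> (cx_vertices K) (cx_vertices K') \<and>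
     (\<forall>\<sigma>. \<sigma> \<subseteq> cx_vertices K \<longrightarrow> (\<sigma> \<in> K \<longleftrightarrow> \<phi> ` \<sigma> \<in> K')) \<and>
     (\<forall>(a, b)\<in>dtv K. dec' (\<phi> a, \<phi> b) = dec (a, b))"

text \<open>An element of \<open>\<hat>G\<close> is represented by (K, dec, (x1,x2), (y1,y2)) with K a
decorated triangulation and (x1,x2), (y1,y2) discrete tangent vectors of K; a function on
\<open>\<hat>G\<close> (i.e. on automorphism orbits) is a function on such data invariant under
isomorphisms of decorated triangulations.\<close>

type_synonym ('v, 'd) Gfun =
  "'v set set \<Rightarrow> ('v \<times> 'v \<Rightarrow> 'd) \<Rightarrow> 'v \<times> 'v \<Rightarrow> 'v \<times> 'v \<Rightarrow> complex"

definition Ghat_function :: "nat \<Rightarrow> 'd set \<Rightarrow> ('v, 'd) Gfun \<Rightarrow> bool" where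
  "Ghat_function d D f \<longleftrightarrow>
     (\<forall>K dec K' dec' \<phi> x1 x2 y1 y2.
        decorated_triangulation d D K dec \<and> decorated_triangulation d D K' dec' \<and>
        dtri_iso \<phi> K dec K' dec' \<and> (x1, x2) \<in> dtv K \<and> (y1, y2) \<in> dtv K \<longrightarrow>
        f K' dec' (\<phi> x1, \<phi> x2) (\<phi> y1, \<phi> y2) = f K dec (x1, x2) (y1, y2))"

text \<open>Convolution: integral against the counting measure on the leaf (the discrete
tangent vectors of the triangulation).\<close>
definition Gconv :: "('v, 'd) Gfun \<Rightarrow> ('v, 'd) Gfun \<Rightarrow> ('v, 'd) Gfun" where
  "Gconv f g K dec x z = (\<Sum>\<^sub>\<infinity>y\<in>dtv K. f K dec x y * g K dec y z)"

definition Gconv_defined :: "nat \<Rightarrow> 'd set \<Rightarrow> ('v, 'd) Gfun \<Rightarrow> ('v, 'd) Gfun \<Rightarrow> bool" where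
  "Gconv_defined d D f g \<longleftrightarrow>
     (\<forall>K dec x z. decorated_triangulation d D K dec \<and> x \<in> dtv K \<and> z \<in> dtv K \<longrightarrow>
        (\<lambda>y. f K dec x y * g K dec y z) summable_on dtv K)"

definition directionally_invariant :: "nat \<Rightarrow> 'd set \<Rightarrow> ('v, 'd) Gfun \<Rightarrow> bool" where
  "directionally_invariant d D f \<longleftrightarrow>
     (\<forall>K dec x1 x2 x3 y1 y2 y3.
        decorated_triangulation d D K dec \<and>
        (x1, x2) \<in> dtv K \<and> (y1, y2) \<in> dtv K \<and> (x1, x3) \<in> dtv K \<and> (y1, y3) \<in> dtv K \<longrightarrow>
        f K dec (x1, x2) (y1, y2) = f K dec (x1, x3) (y1, y3))"

end

theory Submission
  imports Defs
begin

text \<open>Directional invariance says that f(x1,x2,y1,y2) depends on neither direction x2 nor y2;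
in particular each factor of the convolution integrand f(x,y) g(y,z) is unchanged when the
direction of x, resp. of z, is replaced, so the integrands agree term by term.\<close>

lemma directionally_invariantD_left:
  assumes "directionally_invariant d D f" and "decorated_triangulation d D K dec"
    and "(x1, x2) \<in> dtv K" and "(x1, x3) \<in> dtv K" and "y \<in> dtv K"
  shows "f K dec (x1, x2) y = f K dec (x1, x3) y"
  using assms unfolding directionally_invariant_def by (cases y) blast

lemma directionally_invariantD_right:
  assumes "directionally_invariant d D f" and "decorated_triangulation d D K dec"
    and "x \<in> dtv K" and "(y1, y2) \<in> dtv K" and "(y1, y3) \<in> dtv K"
  shows "f K dec x (y1, y2) = f K dec x (y1, y3)"
  using assms unfolding directionally_invariant_def by (cases x) blast

lemma directionally_invariant_Gconv:
  fixes f g :: "('v, 'd) Gfun"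
  assumes f: "directionally_invariant d D f" and g: "directionally_invariant d D g"
  shows "directionally_invariant d D (Gconv f g)"
  unfolding directionally_invariant_def
proof (intro allI impI, elim conjE)
  fix K :: "'v set set" and dec and x1 x2 x3 y1 y2 y3 :: 'v
  assume K: "decorated_triangulation d D K dec"
    and x: "(x1, x2) \<in> dtv K" "(x1, x3) \<in> dtv K"
    and y: "(y1, y2) \<in> dtv K" "(y1, y3) \<in> dtv K"
  have "f K dec (x1, x2) v * g K dec v (y1, y2) = f K dec (x1, x3) v * g K dec v (y1, y3)"
    if "v \<in> dtv K" for v
    using directionally_invariantD_left[OF f K x that]
      directionally_invariantD_right[OF g K that y] by simp
  then show "Gconv f g K dec (x1, x2) (y1, y2) = Gconv f g K dec (x1, x3) (y1, y3)"
    unfolding Gconv_def by (rule infsum_cong)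
qed

theorem mainTheorem17:
  fixes d :: nat and D :: "'d::metric_space set"
    and f g :: "('v, 'd) Gfun"
  assumes "d > 6" and "compact D"
    and "Ghat_function d D f" and "Ghat_function d D g"
    and "directionally_invariant d D f" and "directionally_invariant d D g"
    and "Gconv_defined d D f g"
  shows "directionally_invariant d D (Gconv f g)"
  using assms(5,6) by (rule directionally_invariant_Gconv)

end
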